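(* Let $d,n,m\geq1$ be integers, and let $\mathsf{M}_1$ be an $n$-outcome POVM and $\mathsf{M}_2$ an $m$-outcome POVM on $\mathbb{C}^d$, with $$\bar P(\mathsf{M}_1,\mathsf{M}_2)=\frac{1}{2nm}\sum_{x=1}^n\sum_{y=1}^m\big\|\mathsf{M}_1(x)+\mathsf{M}_2(y)\big\|>\frac12\left(1+\frac{d}{nm}\right).$$ Then the joint measurability degree satisfies $$\mathsf{j}(\mathsf{M}_1,\mathsf{M}_2)\leq\frac{d+nm-(n+m)}{2nm\,\bar P(\mathsf{M}_1,\mathsf{M}_2)-(n+m)}.$$
   Context: $\|\cdot\|$ is the operator norm and $I$ the identity on $\mathbb{C}^d$. Two POVMs are compatible if there exists a POVM $\mathsf{G}(x,y)$ with marginals $\sum_y\mathsf{G}(x,y)=$ first POVM and $\sum_x\mathsf{G}(x,y)=$ second POVM. The joint measurability degree is $\mathsf{j}(\mathsf{M}_1,\mathsf{M}_2)=\max\{t\geq0 : \{t\mathsf{M}_i+(1-t)p_iI\}_{i=1,2}$ are compatible for some probability distributions $p_1$ on $\{1,\dots,n\}$ and $p_2$ on $\{1,\dots,m\}\}$. *)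

theory Defs
  imports "HOL-Analysis.Analysis"
begin

text \<open>Operators on C^d are represented as matrices of type complex^'d^'d,
  where d = CARD('d). The space complex^'d carries the Euclidean norm.\<close>

definition op_norm :: "complex^'d^'d \<Rightarrow> real" where
  "op_norm A = onorm (\<lambda>v::complex^'d. A *v v)"

definition psd :: "complex^'d^'d \<Rightarrow> bool" where
  "psd A \<longleftrightarrow> (\<forall>v::complex^'d.
     let q = (\<Sum>i\<in>UNIV. \<Sum>j\<in>UNIV. cnj (v$i) * A$i$j * v$j) in Im q = 0 \<and> Re q \<ge> 0)"

definition povm :: "'a set \<Rightarrow> ('a \<Rightarrow> complex^'d^'d) \<Rightarrow> bool" where
  "povm X M \<longleftrightarrow> finite X \<and> (\<forall>x\<in>X. psd (M x)) \<and> (\<Sum>x\<in>X. M x) = mat 1"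

definition compatible ::
  "nat \<Rightarrow> nat \<Rightarrow> (nat \<Rightarrow> complex^'d^'d) \<Rightarrow> (nat \<Rightarrow> complex^'d^'d) \<Rightarrow> bool" where
  "compatible n m A B \<longleftrightarrow> (\<exists>G :: nat \<times> nat \<Rightarrow> complex^'d^'d.
     povm ({1..n} \<times> {1..m}) G \<and>
     (\<forall>x\<in>{1..n}. (\<Sum>y\<in>{1..m}. G (x, y)) = A x) \<and>
     (\<forall>y\<in>{1..m}. (\<Sum>x\<in>{1..n}. G (x, y)) = B y))"

definition prob_dist :: "nat \<Rightarrow> (nat \<Rightarrow> real) \<Rightarrow> bool" where
  "prob_dist n p \<longleftrightarrow> (\<forall>x\<in>{1..n}. 0 \<le> p x) \<and> (\<Sum>x\<in>{1..n}. p x) = 1"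

definition noisy :: "real \<Rightarrow> (nat \<Rightarrow> real) \<Rightarrow> (nat \<Rightarrow> complex^'d^'d) \<Rightarrow> nat \<Rightarrow> complex^'d^'d" where
  "noisy t p M x = t *\<^sub>R M x + ((1 - t) * p x) *\<^sub>R mat 1"

definition jm_set :: "nat \<Rightarrow> nat \<Rightarrow> (nat \<Rightarrow> complex^'d^'d) \<Rightarrow> (nat \<Rightarrow> complex^'d^'d) \<Rightarrow> real set" where
  "jm_set n m M1 M2 = {t. t \<ge> 0 \<and> (\<exists>p1 p2. prob_dist n p1 \<and> prob_dist m p2 \<and>
       compatible n m (noisy t p1 M1) (noisy t p2 M2))}"

text \<open>Joint measurability degree (the paper's max, written as Sup).\<close>
definition jm_degree :: "nat \<Rightarrow> nat \<Rightarrow> (nat \<Rightarrow> complex^'d^'d) \<Rightarrow> (nat \<Rightarrow> complex^'d^'d) \<Rightarrow> real" where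
  "jm_degree n m M1 M2 = Sup (jm_set n m M1 M2)"

definition Pbar :: "nat \<Rightarrow> nat \<Rightarrow> (nat \<Rightarrow> complex^'d^'d) \<Rightarrow> (nat \<Rightarrow> complex^'d^'d) \<Rightarrow> real" where
  "Pbar n m M1 M2 = (1 / (2 * real n * real m)) *
     (\<Sum>x\<in>{1..n}. \<Sum>y\<in>{1..m}. op_norm (M1 x + M2 y))"

end

theory Submission
  imports Defs
begin

text \<open>Let \<open>G\<close> be a joint POVM of the noisy versions \<open>N\<^sub>1, N\<^sub>2\<close>. For every cell \<open>(x, y)\<close>,
  \<open>N\<^sub>1(x) + N\<^sub>2(y) = G(x,y) + H\<close>, where \<open>H\<close> collects the other cells of row \<open>x\<close> and column \<open>y\<close>;
  both \<open>H\<close> and \<open>I - H\<close> are sums of effects, so \<open>\<parallel>N\<^sub>1(x) + N\<^sub>2(y)\<parallel> \<le> tr G(x,y) + 1\<close>, and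
  summing over all cells gives at most \<open>d + nm\<close>. On the other hand
  \<open>\<parallel>t(M\<^sub>1(x) + M\<^sub>2(y)) + (1-t)(p\<^sub>1(x) + p\<^sub>2(y))I\<parallel> \<ge> t\<parallel>M\<^sub>1(x) + M\<^sub>2(y)\<parallel> + (1-t)(p\<^sub>1(x) + p\<^sub>2(y))\<close>,
  which sums to \<open>2nm t P + (1-t)(n+m)\<close>. Solving the resulting linear inequality for \<open>t\<close>
  gives the bound.\<close>

definition sesq :: "complex^'d^'d \<Rightarrow> complex^'d \<Rightarrow> complex^'d \<Rightarrow> complex" where
  "sesq A u v = (\<Sum>i\<in>UNIV. cnj (u$i) * (A *v v)$i)"

lemma Re_sesq: "Re (sesq A u v) = inner u (A *v v)"
  by (simp add: sesq_def inner_vec_def inner_complex_def)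

lemma sesq_add_left: "sesq A (u + w) v = sesq A u v + sesq A w v"
  by (simp add: sesq_def sum.distrib algebra_simps)

lemma sesq_add_right: "sesq A u (v + w) = sesq A u v + sesq A u w"
  by (simp add: sesq_def sum.distrib algebra_simps matrix_vector_right_distrib)

lemma sesq_scale_left: "sesq A (c *s u) v = cnj c * sesq A u v"
  by (simp add: sesq_def sum_distrib_left algebra_simps)

lemma sesq_scale_right: "sesq A u (c *s v) = c * sesq A u v"
proof -
  have "A *v (c *s v) = c *s (A *v v)"
    by (simp add: vec_eq_iff matrix_vector_mult_def sum_distrib_left algebra_simps)
  then show ?thesis by (simp add: sesq_def sum_distrib_left algebra_simps)
qed

lemma sesq_add_matrix: "sesq (A + B) u v = sesq A u v + sesq B u v"
  by (simp add: sesq_def sum.distrib algebra_simps matrix_vector_mult_add_rdistrib)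

lemma scaleR_matrix_vector_mult: "((t::real) *\<^sub>R (A::complex^'d^'d)) *v v = t *\<^sub>R (A *v v)"
  by (simp add: vec_eq_iff matrix_vector_mult_def scaleR_sum_right)

lemma sesq_scaleR_matrix: "sesq (c *\<^sub>R A) u v = of_real c * sesq A u v"
proof -
  have "(c *\<^sub>R (A *v v))$i = of_real c * (A *v v)$i" for i
    by (metis scaleR_conv_of_real vector_scaleR_component)
  then show ?thesis
    unfolding sesq_def scaleR_matrix_vector_mult by (simp add: sum_distrib_left algebra_simps)
qed

lemma psd_iff_sesq: "psd A \<longleftrightarrow> (\<forall>v. Im (sesq A v v) = 0 \<and> 0 \<le> Re (sesq A v v))"
proof -
  have "(\<Sum>i\<in>UNIV. \<Sum>j\<in>UNIV. cnj (v$i) * A$i$j * v$j) = sesq A v v" for v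
    by (simp add: sesq_def matrix_vector_mult_def sum_distrib_left mult.assoc)
  then show ?thesis by (simp add: psd_def Let_def)
qed

lemma psd_add: "psd A \<Longrightarrow> psd B \<Longrightarrow> psd (A + B)"
  by (simp add: psd_iff_sesq sesq_add_matrix)

lemma psd_scaleR: "psd A \<Longrightarrow> 0 \<le> c \<Longrightarrow> psd (c *\<^sub>R A)"
  by (simp add: psd_iff_sesq sesq_scaleR_matrix)

lemma psd_zero: "psd 0"
  by (simp add: psd_iff_sesq sesq_def)

lemma psd_sum: "finite S \<Longrightarrow> (\<And>x. x \<in> S \<Longrightarrow> psd (f x)) \<Longrightarrow> psd (\<Sum>x\<in>S. f x)"
  by (induction S rule: finite_induct) (simp_all add: psd_zero psd_add)

lemma psd_mat_1: "psd (mat 1)"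
proof -
  have "sesq (mat 1) v v = of_real (\<Sum>i\<in>UNIV. (cmod (v$i))^2)" for v :: "complex^'d"
    unfolding sesq_def matrix_vector_mul_lid of_real_sum
    by (rule sum.cong) (simp_all add: complex_norm_square mult.commute del: of_real_power)
  then show ?thesis
    unfolding psd_iff_sesq by (metis Im_complex_of_real Re_complex_of_real sum_nonneg zero_le_power2)
qed

lemma psd_form_nonneg: "psd A \<Longrightarrow> 0 \<le> inner v (A *v v)"
  using psd_iff_sesq Re_sesq by metis

text \<open>Polarization: the imaginary part of \<open>sesq A w w\<close> at \<open>w = u + i v\<close> is
  \<open>Re (sesq A u v) - Re (sesq A v u)\<close>.\<close>
lemma psd_form_commute:
  assumes "psd A"
  shows "inner u (A *v v) = inner v (A *v u)"
proof -
  have real: "Im (sesq A w w) = 0" for w using assms psd_iff_sesq by blast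
  have "Re (sesq A u v) = Re (sesq A v u)"
    using real[of "u + \<i> *s v"] real[of u] real[of v]
    by (simp add: sesq_add_left sesq_add_right sesq_scale_left sesq_scale_right)
  then show ?thesis by (simp add: Re_sesq)
qed

lemma nonneg_quadratic_discriminant:
  fixes a b c :: real
  assumes nonneg: "\<And>s. 0 \<le> a + 2 * s * b + s^2 * c" and "0 \<le> c"
  shows "b^2 \<le> a * c"
proof (cases "c = 0")
  case True
  have "b = 0"
  proof (rule ccontr)
    assume "b \<noteq> 0"
    have "0 \<le> a + 2 * (- (a + 1) / (2 * b)) * b" using nonneg[of "- (a + 1) / (2 * b)"] True by simp
    also have "\<dots> = -1" using \<open>b \<noteq> 0\<close> by (simp add: field_simps)
    finally show False by simp
  qed
  then show ?thesis using True by simp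
next
  case False
  have "0 \<le> a + 2 * (- b / c) * b + (- b / c)^2 * c" using nonneg .
  also have "\<dots> = a - b^2 / c" using False by (simp add: field_simps power2_eq_square)
  finally show ?thesis using \<open>0 \<le> c\<close> False by (simp add: field_simps)
qed

lemma psd_cauchy_schwarz:
  assumes "psd A"
  shows "(inner u (A *v v))^2 \<le> inner u (A *v u) * inner v (A *v v)"
proof (rule nonneg_quadratic_discriminant)
  fix s :: real
  have "0 \<le> inner (u + s *\<^sub>R v) (A *v (u + s *\<^sub>R v))" using psd_form_nonneg[OF assms] .
  also have "\<dots> = inner u (A *v u) + s * inner u (A *v v) + s * inner v (A *v u)
      + s^2 * inner v (A *v v)"
    by (simp add: matrix_vector_right_distrib linear_scale inner_add_left inner_add_right
        power2_eq_square algebra_simps)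
  also have "\<dots> = inner u (A *v u) + 2 * s * inner u (A *v v) + s^2 * inner v (A *v v)"
    using psd_form_commute[OF assms, of v u] by simp
  finally show "0 \<le> inner u (A *v u) + 2 * s * inner u (A *v v) + s^2 * inner v (A *v v)" .
  show "0 \<le> inner v (A *v v)" using psd_form_nonneg[OF assms] .
qed

lemma psd_diagonal_nonneg: "psd A \<Longrightarrow> 0 \<le> Re (A$i$i)"
proof -
  assume "psd A"
  have "(A *v axis i 1)$i = A$i$i"
    by (simp add: matrix_vector_mult_def axis_def if_distrib[where f="\<lambda>x. _ * x"] cong: if_cong)
  then show ?thesis using psd_form_nonneg[OF \<open>psd A\<close>, of "axis i 1"] by (simp add: inner_axis')
qed

lemma psd_Re_trace_nonneg: "psd A \<Longrightarrow> 0 \<le> Re (trace A)"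
  unfolding trace_def Re_sum by (rule sum_nonneg) (rule psd_diagonal_nonneg)

lemma trace_sum: "finite S \<Longrightarrow> trace (\<Sum>x\<in>S. f x) = (\<Sum>x\<in>S. trace (f x))"
  for f :: "'a \<Rightarrow> 'b::comm_semiring_1^'n^'n"
  unfolding trace_def by (simp add: sum_component sum.swap[of _ UNIV])

lemma povm_Re_trace_sum:
  assumes "povm X (M :: 'a \<Rightarrow> complex^'d^'d)"
  shows "(\<Sum>x\<in>X. Re (trace (M x))) = real CARD('d)"
proof -
  have "(\<Sum>x\<in>X. Re (trace (M x))) = Re (trace (\<Sum>x\<in>X. M x))"
    using assms unfolding povm_def by (metis trace_sum Re_sum)
  also have "\<dots> = real CARD('d)"
    using assms by (simp add: povm_def trace_I)
  finally show ?thesis .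
qed

lemma op_norm_le_if_form_le:
  fixes A :: "complex^'d^'d"
  assumes "psd A" and form_le: "\<And>v. inner v (A *v v) \<le> S * (norm v)^2"
  shows "op_norm A \<le> S"
  unfolding op_norm_def
proof (rule onorm_le)
  fix v :: "complex^'d"
  have "0 \<le> S * norm v ^ 2" using form_le[of v] psd_form_nonneg[OF assms(1), of v] by simp
  then have Sv: "0 \<le> S * norm v"
    by (cases "v = 0") (simp_all add: zero_le_mult_iff)
  define w where "w = A *v v"
  have "(norm w ^ 2)^2 = (inner w (A *v v))^2" by (simp add: w_def power2_norm_eq_inner)
  also have "\<dots> \<le> inner w (A *v w) * inner v (A *v v)" using psd_cauchy_schwarz[OF assms(1)] .
  also have "\<dots> \<le> (S * norm w ^ 2) * (S * norm v ^ 2)"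
    using form_le[of w] form_le[of v] psd_form_nonneg[OF assms(1), of w]
      psd_form_nonneg[OF assms(1), of v]
    by (meson mult_mono order_trans)
  finally have "(norm w ^ 2)^2 \<le> (S * norm w ^ 2) * (S * norm v ^ 2)" .
  then have "norm w ^ 2 \<le> (S * norm v)^2"
    by (cases "w = 0") (simp, simp add: power2_eq_square algebra_simps)
  then have "norm w \<le> S * norm v" using Sv by (rule power2_le_imp_le)
  then show "norm (A *v v) \<le> S * norm v" by (simp add: w_def)
qed

lemma Re_cnj_mult_mult: "Re (cnj z * (g * z)) = Re g * cmod z ^ 2"
  unfolding cmod_power2 by (simp add: algebra_simps power2_eq_square)

text \<open>Testing \<open>w = G v\<close> against \<open>e = w\<^sub>i e\<^sub>i\<close> in the Cauchy--Schwarz inequality for \<open>G\<close>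
  gives \<open>\<bar>w\<^sub>i\<bar>\<^sup>2 \<le> G\<^sub>i\<^sub>i \<langle>v, G v\<rangle>\<close>; summing, \<open>\<parallel>w\<parallel>\<^sup>2 \<le> tr G \<langle>v, w\<rangle> \<le> tr G \<parallel>v\<parallel> \<parallel>w\<parallel>\<close>.\<close>
lemma op_norm_le_Re_trace:
  fixes G :: "complex^'d^'d"
  assumes "psd G"
  shows "op_norm G \<le> Re (trace G)"
  unfolding op_norm_def
proof (rule onorm_le)
  fix v :: "complex^'d"
  define w where "w = G *v v"
  have coordinate: "(cmod (w$i))^2 \<le> Re (G$i$i) * inner v w" for i
  proof (cases "w$i = 0")
    case True
    then show ?thesis
      using psd_diagonal_nonneg[OF assms] psd_form_nonneg[OF assms] by (simp add: w_def)
  next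
    case False
    define e where "e = axis i (w$i)"
    have "(G *v e)$i = G$i$i * w$i"
      by (simp add: e_def matrix_vector_mult_def axis_def if_distrib[where f="\<lambda>x. _ * x"]
          cong: if_cong)
    then have "inner e (G *v e) = Re (G$i$i) * (cmod (w$i))^2"
      by (simp add: e_def inner_axis' inner_complex_def Re_cnj_mult_mult[symmetric])
    moreover have "inner e w = (cmod (w$i))^2"
      using Re_cnj_mult_mult[of "w$i" 1] by (simp add: e_def inner_axis' inner_complex_def)
    ultimately have "((cmod (w$i))^2)^2 \<le> Re (G$i$i) * (cmod (w$i))^2 * inner v w"
      using psd_cauchy_schwarz[OF assms, of e v] by (simp add: w_def)
    then show ?thesis
      using False by (simp add: power2_eq_square algebra_simps)
  qed
  have "norm w ^ 2 = (\<Sum>i\<in>UNIV. (cmod (w$i))^2)"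
    by (simp add: power2_norm_eq_inner inner_vec_def)
  also have "\<dots> \<le> (\<Sum>i\<in>UNIV. Re (G$i$i) * inner v w)" by (rule sum_mono) (rule coordinate)
  also have "\<dots> = Re (trace G) * inner v w" by (simp add: trace_def Re_sum sum_distrib_right)
  also have "\<dots> \<le> Re (trace G) * (norm v * norm w)"
    using psd_Re_trace_nonneg[OF assms] norm_cauchy_schwarz[of v w] by (rule mult_left_mono[rotated])
  finally have "norm w ^ 2 \<le> Re (trace G) * (norm v * norm w)" .
  then show "norm (G *v v) \<le> Re (trace G) * norm v"
    using psd_Re_trace_nonneg[OF assms]
    by (cases "w = 0") (simp_all add: w_def power2_eq_square algebra_simps)
qed

lemma op_norm_le_1:
  fixes H :: "complex^'d^'d"
  assumes "psd H" and "psd (mat 1 - H)"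
  shows "op_norm H \<le> 1"
proof (rule op_norm_le_if_form_le[OF assms(1)])
  fix v :: "complex^'d"
  have "0 \<le> inner v ((mat 1 - H) *v v)" using psd_form_nonneg[OF assms(2)] .
  then show "inner v (H *v v) \<le> 1 * (norm v)^2"
    by (simp add: matrix_vector_mult_diff_rdistrib inner_diff_right power2_norm_eq_inner)
qed

lemma op_norm_add_le: "op_norm (A + B) \<le> op_norm A + op_norm B"
  unfolding op_norm_def matrix_vector_mult_add_rdistrib
  by (rule onorm_triangle) simp_all

lemma op_norm_affine_ge:
  fixes A :: "complex^'d^'d"
  assumes "psd A" and "0 < t"
  shows "t * op_norm A + c \<le> op_norm (t *\<^sub>R A + c *\<^sub>R mat 1)"
proof -
  define B where "B = t *\<^sub>R A + c *\<^sub>R mat 1"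
  have "op_norm A \<le> (op_norm B - c) / t"
  proof (rule op_norm_le_if_form_le[OF assms(1)])
    fix v :: "complex^'d"
    have "t * inner v (A *v v) + c * (norm v)^2 = inner v (B *v v)"
      by (simp add: B_def matrix_vector_mult_add_rdistrib scaleR_matrix_vector_mult inner_add_right
          power2_norm_eq_inner)
    also have "\<dots> \<le> norm v * norm (B *v v)" by (rule norm_cauchy_schwarz)
    also have "\<dots> \<le> norm v * (op_norm B * norm v)"
      unfolding op_norm_def by (rule mult_left_mono[OF onorm]) simp_all
    finally show "inner v (A *v v) \<le> (op_norm B - c) / t * (norm v)^2"
      using assms(2) by (simp add: field_simps power2_eq_square)
  qed
  then show ?thesis using assms(2) by (simp add: B_def field_simps)
qed

lemma joint_povm_op_norm_marginals_le:
  fixes G :: "'a \<times> 'b \<Rightarrow> complex^'d^'d"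
  assumes G: "povm (X \<times> Y) G" and x: "x \<in> X" and y: "y \<in> Y"
  shows "op_norm ((\<Sum>y'\<in>Y. G (x, y')) + (\<Sum>x'\<in>X. G (x', y))) \<le> Re (trace (G (x, y))) + 1"
proof -
  have fin: "finite X" "finite Y"
    using G x y unfolding povm_def by (auto dest: finite_cartesian_productD1 finite_cartesian_productD2)
  have psd_G: "psd (G (x', y'))" if "x' \<in> X" "y' \<in> Y" for x' y'
    using G that unfolding povm_def by blast
  define H where "H = (\<Sum>y'\<in>Y. G (x, y')) + (\<Sum>x'\<in>X - {x}. G (x', y))"
  have split: "(\<Sum>y'\<in>Y. G (x, y')) + (\<Sum>x'\<in>X. G (x', y)) = G (x, y) + H"
    using fin x by (simp add: H_def sum.remove algebra_simps)
  have "mat 1 = (\<Sum>x'\<in>X. \<Sum>y'\<in>Y. G (x', y'))"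
    using G unfolding povm_def by (simp add: sum.cartesian_product)
  also have "\<dots> = (\<Sum>y'\<in>Y. G (x, y')) + (\<Sum>x'\<in>X - {x}. G (x', y) + (\<Sum>y'\<in>Y - {y}. G (x', y')))"
    using fin x y by (simp add: sum.remove)
  also have "\<dots> = H + (\<Sum>x'\<in>X - {x}. \<Sum>y'\<in>Y - {y}. G (x', y'))"
    by (simp add: H_def sum.distrib algebra_simps)
  finally have "mat 1 - H = (\<Sum>x'\<in>X - {x}. \<Sum>y'\<in>Y - {y}. G (x', y'))"
    by (simp add: algebra_simps)
  then have "psd (mat 1 - H)"
    using fin by (auto intro!: psd_sum psd_G)
  moreover have "psd H"
    unfolding H_def using fin x y by (auto intro!: psd_add psd_sum psd_G)
  ultimately have "op_norm H \<le> 1" by (rule op_norm_le_1[rotated])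
  have "op_norm (G (x, y) + H) \<le> op_norm (G (x, y)) + op_norm H" by (rule op_norm_add_le)
  also have "\<dots> \<le> Re (trace (G (x, y))) + 1"
    using op_norm_le_Re_trace[OF psd_G[OF x y]] \<open>op_norm H \<le> 1\<close> by linarith
  finally show ?thesis unfolding split .
qed

lemma compatible_sum_op_norm_le:
  fixes A B :: "nat \<Rightarrow> complex^'d^'d"
  assumes "compatible n m A B"
  shows "(\<Sum>x\<in>{1..n}. \<Sum>y\<in>{1..m}. op_norm (A x + B y)) \<le> real CARD('d) + real n * real m"
proof -
  obtain G :: "nat \<times> nat \<Rightarrow> complex^'d^'d" where G: "povm ({1..n} \<times> {1..m}) G"
    and A: "\<And>x. x \<in> {1..n} \<Longrightarrow> (\<Sum>y\<in>{1..m}. G (x, y)) = A x"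
    and B: "\<And>y. y \<in> {1..m} \<Longrightarrow> (\<Sum>x\<in>{1..n}. G (x, y)) = B y"
    using assms unfolding compatible_def by blast
  have "(\<Sum>x\<in>{1..n}. \<Sum>y\<in>{1..m}. op_norm (A x + B y))
      \<le> (\<Sum>x\<in>{1..n}. \<Sum>y\<in>{1..m}. Re (trace (G (x, y))) + 1)"
  proof (intro sum_mono)
    fix x y assume "x \<in> {1..n}" "y \<in> {1..m}"
    then show "op_norm (A x + B y) \<le> Re (trace (G (x, y))) + 1"
      using joint_povm_op_norm_marginals_le[OF G] by (simp only: A B)
  qed
  also have "\<dots> = real CARD('d) + real n * real m"
    using povm_Re_trace_sum[OF G] by (simp add: sum.distrib sum.cartesian_product)
  finally show ?thesis .
qed

lemma scaled_Pbar_eq_sum: "2 * real n * real m * Pbar n m M1 M2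
    = (\<Sum>x\<in>{1..n}. \<Sum>y\<in>{1..m}. op_norm (M1 x + M2 y))"
  by (cases "n = 0 \<or> m = 0") (auto simp: Pbar_def)

lemma sum_op_norm_noisy_ge:
  assumes "povm {1..n} M1" and "povm {1..m} M2"
    and "prob_dist n p1" and "prob_dist m p2" and "0 < t"
  shows "t * (2 * real n * real m * Pbar n m M1 M2) + (1 - t) * (real n + real m)
    \<le> (\<Sum>x\<in>{1..n}. \<Sum>y\<in>{1..m}. op_norm (noisy t p1 M1 x + noisy t p2 M2 y))"
proof -
  have "t * op_norm (M1 x + M2 y) + (1 - t) * (p1 x + p2 y)
      \<le> op_norm (noisy t p1 M1 x + noisy t p2 M2 y)" if "x \<in> {1..n}" "y \<in> {1..m}" for x y
  proof -
    have "psd (M1 x + M2 y)"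
      using assms(1,2) that unfolding povm_def by (auto intro: psd_add)
    moreover have "noisy t p1 M1 x + noisy t p2 M2 y
        = t *\<^sub>R (M1 x + M2 y) + ((1 - t) * (p1 x + p2 y)) *\<^sub>R mat 1"
      by (simp add: noisy_def scaleR_add_right scaleR_add_left algebra_simps)
    ultimately show ?thesis using op_norm_affine_ge assms(5) by metis
  qed
  then have "(\<Sum>x\<in>{1..n}. \<Sum>y\<in>{1..m}. t * op_norm (M1 x + M2 y) + (1 - t) * (p1 x + p2 y))
      \<le> (\<Sum>x\<in>{1..n}. \<Sum>y\<in>{1..m}. op_norm (noisy t p1 M1 x + noisy t p2 M2 y))"
    by (intro sum_mono) auto
  moreover have "(\<Sum>x\<in>{1..n}. \<Sum>y\<in>{1..m}. p1 x + p2 y) = real n + real m"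
    using assms(3,4) unfolding prob_dist_def by (simp add: sum.distrib sum_distrib_left[symmetric])
  ultimately show ?thesis
    by (simp add: scaled_Pbar_eq_sum sum.distrib sum_distrib_left[symmetric])
qed

lemma compatible_trivial:
  fixes M1 M2 :: "nat \<Rightarrow> complex^'d^'d"
  assumes "prob_dist n p1" and "prob_dist m p2"
  shows "compatible n m (noisy 0 p1 M1) (noisy 0 p2 M2)"
proof -
  define G :: "nat \<times> nat \<Rightarrow> complex^'d^'d" where "G = (\<lambda>(x, y). (p1 x * p2 y) *\<^sub>R mat 1)"
  have "(\<Sum>z\<in>{1..n} \<times> {1..m}. G z) = ((\<Sum>x\<in>{1..n}. p1 x) * (\<Sum>y\<in>{1..m}. p2 y)) *\<^sub>R mat 1"
    by (simp add: G_def sum.cartesian_product[symmetric] scaleR_sum_left sum_product)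
  then have "(\<Sum>z\<in>{1..n} \<times> {1..m}. G z) = mat 1"
    using assms unfolding prob_dist_def by simp
  then have "povm ({1..n} \<times> {1..m}) G"
    using assms unfolding povm_def prob_dist_def G_def by (auto intro!: psd_scaleR psd_mat_1)
  moreover have "(\<Sum>y\<in>{1..m}. G (x, y)) = noisy 0 p1 M1 x" for x
    using assms(2) unfolding prob_dist_def G_def noisy_def
    by (simp add: scaleR_sum_left[symmetric] sum_distrib_left[symmetric])
  moreover have "(\<Sum>x\<in>{1..n}. G (x, y)) = noisy 0 p2 M2 y" for y
    using assms(1) unfolding prob_dist_def G_def noisy_def
    by (simp add: scaleR_sum_left[symmetric] sum_distrib_right[symmetric])
  ultimately show ?thesis unfolding compatible_def by blast
qed

lemma prob_dist_uniform: "1 \<le> n \<Longrightarrow> prob_dist n (\<lambda>_. 1 / real n)"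
  by (simp add: prob_dist_def)

lemma zero_mem_jm_set: "1 \<le> n \<Longrightarrow> 1 \<le> m \<Longrightarrow> 0 \<in> jm_set n m M1 M2"
  unfolding jm_set_def using compatible_trivial prob_dist_uniform by blast

lemma card_plus_mult_ge:
  assumes "1 \<le> n" and "1 \<le> m"
  shows "real n + real m \<le> real CARD('a::finite) + real n * real m"
proof -
  have "0 \<le> (real n - 1) * (real m - 1)" using assms by simp
  moreover have "1 \<le> real CARD('a)" by (simp add: Suc_leI)
  moreover have "(real n - 1) * (real m - 1) = real n * real m - (real n + real m) + 1"
    by (simp add: algebra_simps)
  ultimately show ?thesis by linarith
qed

lemma jm_set_linear_bound:
  fixes M1 M2 :: "nat \<Rightarrow> complex^'d^'d"
  assumes "1 \<le> n" and "1 \<le> m" and "povm {1..n} M1" and "povm {1..m} M2"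
    and "t \<in> jm_set n m M1 M2"
  shows "t * (2 * real n * real m * Pbar n m M1 M2 - (real n + real m))
    \<le> real CARD('d) + real n * real m - (real n + real m)"
proof (cases "t = 0")
  case True
  then show ?thesis using card_plus_mult_ge[OF assms(1,2), where 'a='d] by simp
next
  case False
  obtain p1 p2 where p1: "prob_dist n p1" and p2: "prob_dist m p2"
    and compatible: "compatible n m (noisy t p1 M1) (noisy t p2 M2)" and "0 \<le> t"
    using assms(5) unfolding jm_set_def by blast
  with False have "0 < t" by simp
  have "t * (2 * real n * real m * Pbar n m M1 M2) + (1 - t) * (real n + real m)
      \<le> (\<Sum>x\<in>{1..n}. \<Sum>y\<in>{1..m}. op_norm (noisy t p1 M1 x + noisy t p2 M2 y))"
    by (rule sum_op_norm_noisy_ge[OF assms(3,4) p1 p2 \<open>0 < t\<close>])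
  also have "\<dots> \<le> real CARD('d) + real n * real m"
    by (rule compatible_sum_op_norm_le[OF compatible])
  finally show ?thesis by (simp add: algebra_simps)
qed

theorem mainTheorem5:
  fixes M1 M2 :: "nat \<Rightarrow> complex^'d^'d" and n m :: nat
  assumes "n \<ge> 1" and "m \<ge> 1"
    and "povm {1..n} M1" and "povm {1..m} M2"
    and "Pbar n m M1 M2 > (1/2) * (1 + real CARD('d) / (real n * real m))"
  shows "bdd_above (jm_set n m M1 M2) \<and>
    jm_degree n m M1 M2 \<le> (real CARD('d) + real n * real m - (real n + real m)) /
        (2 * real n * real m * Pbar n m M1 M2 - (real n + real m))"
proof -
  have "real n * real m + real CARD('d) < 2 * real n * real m * Pbar n m M1 M2"
    using assms(1,2,5) by (simp add: field_simps)
  moreover have "real n + real m \<le> real CARD('d) + real n * real m"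
    by (rule card_plus_mult_ge[OF assms(1,2)])
  ultimately have denominator: "0 < 2 * real n * real m * Pbar n m M1 M2 - (real n + real m)"
    by linarith
  have bound: "t \<le> (real CARD('d) + real n * real m - (real n + real m)) /
        (2 * real n * real m * Pbar n m M1 M2 - (real n + real m))"
    if "t \<in> jm_set n m M1 M2" for t
    using jm_set_linear_bound[OF assms(1-4) that] denominator by (simp add: pos_le_divide_eq)
  then have "bdd_above (jm_set n m M1 M2)" by (rule bdd_aboveI)
  moreover have "jm_degree n m M1 M2 \<le> (real CARD('d) + real n * real m - (real n + real m)) /
        (2 * real n * real m * Pbar n m M1 M2 - (real n + real m))"
    unfolding jm_degree_def using zero_mem_jm_set[OF assms(1,2)] bound by (intro cSup_least) auto
  ultimately show ?thesis by blast
qed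

end
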